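(* Let $\tau:\mathbb N\to\mathbb N$ be defined by $\tau(n)=\lfloor\varphi n+1\rfloor$ if $n\in R_{2,0}$, $\tau(n)=\lfloor\varphi n-1\rfloor$ if $n\in R_{1,0}$, and $\tau(n)=\lfloor(\varphi-1)n+1\rfloor$ if $n\in R_{1,1}$. If $n\in R_{1,0}$, then $\tau(n)\in R_{1,0}$ and $\tau^3(n)=\tau^2(n)+\tau(n)-2$.
   Context: $\mathbb N=\{1,2,\dots\}$, $\varphi=\frac{1+\sqrt5}{2}$, $F$ the Fibonacci numbers ($F(0)=0,F(1)=F(2)=1$). For $i\in\mathbb Z^{\ge0},j\in\mathbb Z$, $R_{i,j}$ is the range of $n\mapsto F(i+1)\lfloor n\varphi\rfloor+F(i)n-j$, $n\in\mathbb N$; the sets $R_{2,0},R_{1,0},R_{1,1}$ partition $\mathbb N$. $\tau^k$ denotes the $k$-fold composition. *)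

theory Defs
  imports Complex_Main "HOL-Number_Theory.Fib"
begin

definition phi :: real where "phi = (1 + sqrt 5) / 2"

definition R :: "nat \<Rightarrow> int \<Rightarrow> int set" where
  "R i j = {int (fib (i+1)) * \<lfloor>real n * phi\<rfloor> + int (fib i) * int n - j | n::nat. n \<ge> 1}"

text \<open>tau on positive naturals; the value at 0 is irrelevant (0 is not in N).\<close>
definition tau :: "nat \<Rightarrow> nat" where
  "tau n = (if int n \<in> R 2 0 then nat \<lfloor>phi * real n + 1\<rfloor>
            else if int n \<in> R 1 0 then nat \<lfloor>phi * real n - 1\<rfloor>
            else nat \<lfloor>(phi - 1) * real n + 1\<rfloor>)"

end

theory Submission
  imports Defs "HOL-Computational_Algebra.Primes"
begin

text \<open>
  Write \<open>a k = \<lfloor>k\<phi>\<rfloor>\<close> and \<open>b k = a k + k = \<lfloor>k\<phi>\<^sup>2\<rfloor>\<close> for the lower and upper Wythoff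
  sequences, so that \<open>R\<^sub>1\<^sub>,\<^sub>0\<close> is the range of \<open>b\<close> and \<open>R\<^sub>2\<^sub>,\<^sub>0\<close> that of \<open>a \<circ> b\<close>.
  With \<open>f\<close> the fractional part of \<open>k\<phi>\<close>, the relation \<open>\<phi>\<^sup>2 = \<phi> + 1\<close> gives
  \<open>a k \<cdot> \<phi> = a k + k - f(\<phi> - 1)\<close>, hence \<open>a (a k) = a k + k - 1\<close> and \<open>a (b k) = 2 a k + k\<close>.
  By Beatty's theorem the ranges of \<open>a\<close> and \<open>b\<close> are disjoint, so on \<open>n = b k\<close> the map
  \<open>\<tau>\<close> takes its second branch and \<open>\<tau> (b k) = a (b k) - 1 = b (a k)\<close>.
  Thus \<open>\<tau>\<^sup>m (b k) = b (a\<^sup>m k)\<close>, and the recurrence follows from \<open>a (a k) = a k + k - 1\<close>.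
\<close>

lemma sqrt_prime_irrational:
  assumes "prime (p::nat)"
  shows "sqrt (real p) \<notin> \<rat>"
proof
  assume "sqrt (real p) \<in> \<rat>"
  then obtain m n :: nat where "n \<noteq> 0" and "\<bar>sqrt (real p)\<bar> = real m / real n"
    and "coprime m n"
    by (rule Rats_abs_nat_div_natE)
  then have "real m = real n * sqrt (real p)"
    by (simp add: field_simps)
  then have "real (m\<^sup>2) = real (p * n\<^sup>2)"
    by (simp add: power_mult_distrib)
  then have sq_eq: "m\<^sup>2 = p * n\<^sup>2"
    by linarith
  then have "p dvd m"
    using assms prime_dvd_power by (metis dvd_triv_left)
  then obtain r where "m = p * r" ..
  with sq_eq assms have "n\<^sup>2 = p * r\<^sup>2"
    by (simp add: power2_eq_square prime_gt_0_nat algebra_simps)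
  then have "p dvd n"
    using assms prime_dvd_power by (metis dvd_triv_left)
  with \<open>p dvd m\<close> \<open>coprime m n\<close> assms show False
    by (metis coprime_common_divisor_nat not_prime_1)
qed

lemma phi_squared: "phi * phi = phi + 1"
  unfolding phi_def by (simp add: field_simps)

lemma one_less_phi: "1 < phi"
  and phi_less_2: "phi < 2"
proof -
  have "sqrt 1 < sqrt 5" "sqrt 5 < sqrt 9"
    by (simp_all only: real_sqrt_less_iff)
  moreover have "sqrt 9 = 3"
    using real_sqrt_unique[of 3 9] by simp
  ultimately show "1 < phi" "phi < 2"
    unfolding phi_def by simp_all
qed

lemma phi_irrational: "phi \<notin> \<rat>"
proof
  assume "phi \<in> \<rat>"
  then have "2 * phi - 1 \<in> \<rat>"
    by simp
  moreover have "2 * phi - 1 = sqrt (real 5)"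
    by (simp add: phi_def field_simps)
  ultimately show False
    using sqrt_prime_irrational[of 5] by simp
qed

lemma of_int_mult_phi_not_Ints:
  assumes "k \<noteq> 0"
  shows "of_int k * phi \<notin> \<int>"
proof
  assume "of_int k * phi \<in> \<int>"
  then have "of_int k * phi / of_int k \<in> \<rat>"
    using Ints_subset_Rats by (intro Rats_divide) auto
  also have "of_int k * phi / of_int k = phi"
    using assms by simp
  finally show False
    using phi_irrational by simp
qed

definition lower_wythoff :: "int \<Rightarrow> int" where
  "lower_wythoff k = \<lfloor>of_int k * phi\<rfloor>"

definition upper_wythoff :: "int \<Rightarrow> int" where
  "upper_wythoff k = lower_wythoff k + k"

lemma lower_wythoff_ge_1:
  assumes "k \<ge> 1"
  shows "lower_wythoff k \<ge> 1"
proof -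
  have "1 * 1 \<le> of_int k * phi"
    using assms one_less_phi by (intro mult_mono) simp_all
  then show ?thesis
    unfolding lower_wythoff_def by linarith
qed

lemma lower_wythoff_mult_phi:
  "of_int (lower_wythoff k) * phi
     = of_int (lower_wythoff k + k) - frac (of_int k * phi) * (phi - 1)"
proof -
  define f where "f = frac (of_int k * phi)"
  have a_eq: "of_int (lower_wythoff k) = of_int k * phi - f"
    unfolding lower_wythoff_def f_def frac_def by simp
  have "of_int (lower_wythoff k) * phi = of_int k * (phi * phi) - f * phi"
    unfolding a_eq by (simp add: algebra_simps)
  also have "\<dots> = of_int k * (phi + 1) - f * phi"
    by (simp only: phi_squared)
  also have "\<dots> = of_int (lower_wythoff k + k) - f * (phi - 1)"
    unfolding of_int_add a_eq by (simp add: algebra_simps)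
  finally show ?thesis
    unfolding f_def .
qed

lemma lower_wythoff_lower_wythoff:
  assumes "k \<noteq> 0"
  shows "lower_wythoff (lower_wythoff k) = lower_wythoff k + k - 1"
proof -
  define f where "f = frac (of_int k * phi)"
  have "0 < f" "f < 1"
    using of_int_mult_phi_not_Ints[OF assms] frac_lt_1 by (simp_all add: f_def)
  then have "0 < f * (phi - 1)" "f * (phi - 1) < 1"
    using one_less_phi phi_less_2 mult_strict_mono[of f 1 "phi - 1" 1] by simp_all
  then show ?thesis
    unfolding lower_wythoff_def[of "lower_wythoff k"] lower_wythoff_mult_phi f_def[symmetric]
    by (intro floor_unique) simp_all
qed

lemma lower_wythoff_upper_wythoff:
  "lower_wythoff (upper_wythoff k) = 2 * lower_wythoff k + k"
proof -
  define f where "f = frac (of_int k * phi)"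
  have "0 \<le> f" "f < 1"
    using frac_lt_1 by (simp_all add: f_def)
  then have "0 \<le> f * (2 - phi)" "f * (2 - phi) < 1"
    using one_less_phi phi_less_2 mult_strict_mono[of f 1 "2 - phi" 1] by simp_all
  moreover have "of_int (upper_wythoff k) * phi
      = of_int (2 * lower_wythoff k + k) + f * (2 - phi)"
    using lower_wythoff_mult_phi[of k]
    unfolding upper_wythoff_def lower_wythoff_def f_def frac_def
    by (simp add: algebra_simps)
  ultimately show ?thesis
    unfolding lower_wythoff_def[of "upper_wythoff k"] by (intro floor_unique) simp_all
qed

lemma beatty_floor_neq:
  fixes \<alpha> \<beta> :: real
  assumes "0 < \<alpha>" "0 < \<beta>" "1 / \<alpha> + 1 / \<beta> = 1"
    and "of_int p * \<alpha> \<notin> \<int>" "of_int q * \<beta> \<notin> \<int>"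
  shows "\<lfloor>of_int p * \<alpha>\<rfloor> \<noteq> \<lfloor>of_int q * \<beta>\<rfloor>"
proof
  assume floor_eq: "\<lfloor>of_int p * \<alpha>\<rfloor> = \<lfloor>of_int q * \<beta>\<rfloor>"
  define N where "N = \<lfloor>of_int p * \<alpha>\<rfloor>"
  have "of_int N < of_int p * \<alpha>" "of_int p * \<alpha> < of_int N + 1"
    "of_int N < of_int q * \<beta>" "of_int q * \<beta> < of_int N + 1"
    using assms(4,5) floor_eq frac_gt_0_iff[of "of_int p * \<alpha>"] frac_gt_0_iff[of "of_int q * \<beta>"]
    unfolding N_def frac_def by linarith+
  with assms(1,2) have "of_int N / \<alpha> < of_int p" "of_int p < (of_int N + 1) / \<alpha>"
    "of_int N / \<beta> < of_int q" "of_int q < (of_int N + 1) / \<beta>"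
    by (simp_all add: field_simps)
  moreover have "x / \<alpha> + x / \<beta> = x" for x :: real
    using assms(3) by (metis mult.right_neutral distrib_left times_divide_eq_right)
  ultimately have "of_int N < real_of_int (p + q)" "real_of_int (p + q) < of_int (N + 1)"
    by (metis add_strict_mono of_int_add of_int_1)+
  then have "N < p + q" "p + q < N + 1"
    by (simp_all only: of_int_less_iff)
  then show False
    by linarith
qed

lemma lower_wythoff_neq_upper_wythoff:
  assumes "p \<noteq> 0" "q \<noteq> 0"
  shows "lower_wythoff p \<noteq> upper_wythoff q"
proof -
  have "upper_wythoff q = \<lfloor>of_int q * (phi + 1)\<rfloor>"
    unfolding upper_wythoff_def lower_wythoff_def by (simp add: distrib_left)
  moreover have "of_int q * (phi + 1) \<notin> \<int>"
  proof
    assume "of_int q * (phi + 1) \<in> \<int>"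
    then have "of_int q * (phi + 1) - of_int q \<in> \<int>"
      by simp
    with of_int_mult_phi_not_Ints[OF assms(2)] show False
      by (simp add: algebra_simps)
  qed
  moreover have "1 / phi + 1 / (phi + 1) = 1"
    using one_less_phi phi_squared by (simp add: field_simps)
  ultimately show ?thesis
    unfolding lower_wythoff_def
    using beatty_floor_neq[of phi "phi + 1" p q] one_less_phi of_int_mult_phi_not_Ints[OF assms(1)]
    by simp
qed

lemma R_eq_image:
  "R i j = (\<lambda>k. int (fib (Suc i)) * lower_wythoff k + int (fib i) * k - j) ` {1..}"
proof (intro equalityI subsetI)
  fix x
  assume "x \<in> R i j"
  then obtain n :: nat where "n \<ge> 1"
    and "x = int (fib (Suc i)) * \<lfloor>real n * phi\<rfloor> + int (fib i) * int n - j"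
    unfolding R_def by auto
  then show "x \<in> (\<lambda>k. int (fib (Suc i)) * lower_wythoff k + int (fib i) * k - j) ` {1..}"
    unfolding lower_wythoff_def by (intro image_eqI[of _ _ "int n"]) simp_all
next
  fix x
  assume "x \<in> (\<lambda>k. int (fib (Suc i)) * lower_wythoff k + int (fib i) * k - j) ` {1..}"
  then obtain k where "k \<ge> 1" and "x = int (fib (Suc i)) * lower_wythoff k + int (fib i) * k - j"
    by auto
  then show "x \<in> R i j"
    unfolding R_def lower_wythoff_def by (intro CollectI exI[of _ "nat k"]) simp
qed

lemma R_1_0_eq: "R 1 0 = upper_wythoff ` {1..}"
  unfolding R_eq_image upper_wythoff_def[abs_def] by (simp add: numeral_2_eq_2)

lemma R_2_0_eq: "R 2 0 = (lower_wythoff \<circ> upper_wythoff) ` {1..}"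
  unfolding R_eq_image comp_def lower_wythoff_upper_wythoff
  by (simp add: numeral_2_eq_2 numeral_3_eq_3)

lemma tau_upper_wythoff:
  assumes "k \<ge> 1" "int n = upper_wythoff k"
  shows "int (tau n) = upper_wythoff (lower_wythoff k)"
proof -
  have "int n \<in> R 1 0"
    using assms unfolding R_1_0_eq by auto
  moreover have "int n \<notin> R 2 0"
  proof
    assume "int n \<in> R 2 0"
    then obtain j where "j \<ge> 1" "int n = lower_wythoff (upper_wythoff j)"
      unfolding R_2_0_eq by auto
    moreover from \<open>j \<ge> 1\<close> have "upper_wythoff j \<noteq> 0"
      using lower_wythoff_ge_1 unfolding upper_wythoff_def by fastforce
    ultimately show False
      using assms lower_wythoff_neq_upper_wythoff[of "upper_wythoff j" k] by simp
  qed
  ultimately have "tau n = nat \<lfloor>of_int (upper_wythoff k) * phi - 1\<rfloor>"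
    unfolding tau_def by (simp flip: assms(2) add: mult.commute)
  also have "\<dots> = nat (upper_wythoff (lower_wythoff k))"
    using lower_wythoff_upper_wythoff[of k] lower_wythoff_lower_wythoff[of k] assms(1)
    unfolding lower_wythoff_def[of "upper_wythoff k"] upper_wythoff_def[of "lower_wythoff k"]
    by simp
  finally show ?thesis
    using lower_wythoff_ge_1[OF assms(1)] lower_wythoff_ge_1[OF lower_wythoff_ge_1[OF assms(1)]]
    by (simp add: upper_wythoff_def)
qed

lemma funpow_lower_wythoff_ge_1: "k \<ge> 1 \<Longrightarrow> (lower_wythoff ^^ m) k \<ge> 1"
  by (induction m) (simp_all add: lower_wythoff_ge_1)

lemma funpow_tau_upper_wythoff:
  assumes "k \<ge> 1" "int n = upper_wythoff k"
  shows "int ((tau ^^ m) n) = upper_wythoff ((lower_wythoff ^^ m) k)"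
  by (induction m) (simp_all add: assms tau_upper_wythoff funpow_lower_wythoff_ge_1)

theorem lemma4p6:
  fixes n :: nat
  assumes "int n \<in> R 1 0"
  shows "int (tau n) \<in> R 1 0 \<and>
         int ((tau ^^ 3) n) = int ((tau ^^ 2) n) + int (tau n) - 2"
proof -
  obtain k where k: "k \<ge> 1" "int n = upper_wythoff k"
    using assms unfolding R_1_0_eq by auto
  define k\<^sub>1 k\<^sub>2 k\<^sub>3 where "k\<^sub>1 = lower_wythoff k" and "k\<^sub>2 = lower_wythoff k\<^sub>1" and "k\<^sub>3 = lower_wythoff k\<^sub>2"
  have "k\<^sub>1 \<ge> 1" "k\<^sub>2 \<ge> 1"
    using funpow_lower_wythoff_ge_1[OF k(1), of 1] funpow_lower_wythoff_ge_1[OF k(1), of 2]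
    by (simp_all add: k\<^sub>1_def k\<^sub>2_def numeral_2_eq_2)
  have tau_iterates: "int (tau n) = upper_wythoff k\<^sub>1" "int ((tau ^^ 2) n) = upper_wythoff k\<^sub>2"
    "int ((tau ^^ 3) n) = upper_wythoff k\<^sub>3"
    using funpow_tau_upper_wythoff[OF k, of 1] funpow_tau_upper_wythoff[OF k, of 2]
      funpow_tau_upper_wythoff[OF k, of 3]
    by (simp_all add: k\<^sub>1_def k\<^sub>2_def k\<^sub>3_def numeral_2_eq_2 numeral_3_eq_3)
  have "k\<^sub>3 = k\<^sub>2 + k\<^sub>1 - 1"
    using lower_wythoff_lower_wythoff[of k\<^sub>1] \<open>k\<^sub>1 \<ge> 1\<close> unfolding k\<^sub>2_def k\<^sub>3_def by simp
  moreover have "lower_wythoff k\<^sub>3 = k\<^sub>3 + k\<^sub>2 - 1"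
    using lower_wythoff_lower_wythoff[of k\<^sub>2] \<open>k\<^sub>2 \<ge> 1\<close> unfolding k\<^sub>3_def by simp
  ultimately have "upper_wythoff k\<^sub>3 = upper_wythoff k\<^sub>2 + upper_wythoff k\<^sub>1 - 2"
    unfolding upper_wythoff_def k\<^sub>2_def[symmetric] k\<^sub>3_def[symmetric] by linarith
  moreover have "upper_wythoff k\<^sub>1 \<in> R 1 0"
    using \<open>k\<^sub>1 \<ge> 1\<close> unfolding R_1_0_eq by simp
  ultimately show ?thesis
    unfolding tau_iterates by simp
qed

end
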